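(* Let $n\ge 2$, let $f:\{0,1\}^n\to\{0,1\}^n$ and $\alpha\in\{0,1\}$. Then every arc of $G(f^\alpha)$ (with its sign) is an arc of $G(f)$, i.e. $G(f^\alpha)$ is a subgraph of $G(f)$. Furthermore, if $G(f)$ has no arc from vertex $n$ to a vertex $i\neq n$, then $G(f^\alpha)=G(f)\setminus n$, the signed graph obtained from $G(f)$ by removing vertex $n$ and all arcs having $n$ as initial or final vertex.
   Context: For $x\in\{0,1\}^m$ and $j\in\{1,\dots,m\}$, $\overline{x}^j$ denotes $x$ with its $j$-th component switched. For $g=(g_1,\dots,g_m):\{0,1\}^m\to\{0,1\}^m$, the discrete Jacobian entries are $g_{ij}(x)=\frac{g_i(\overline{x}^j)-g_i(x)}{\overline{x}^j_j-x_j}\in\{-1,0,1\}$. The interaction graph $G(g)$ is the signed directed graph with vertex set $\{1,\dots,m\}$ having an arc from $j$ to $i$ of sign $s\in\{-1,1\}$ whenever $g_{ij}(x)=s$ for at least one $x\in\{0,1\}^m$ (both a positive and a negative arc between the same pair are allowed). For $\alpha\in\{0,1\}$, $f^\alpha:\{0,1\}^{n-1}\to\{0,1\}^{n-1}$ is defined by $f^\alpha(x)=(f_1(x,\alpha),\dots,f_{n-1}(x,\alpha))$. *)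

theory Defs
  imports Main
begin

text \<open>A point of {0,1}^m is encoded as a function nat => bool whose components
  are indexed by 1..m (True = 1, False = 0) and which is False outside 1..m.\<close>

definition bstates :: "nat \<Rightarrow> (nat \<Rightarrow> bool) set" where
  "bstates m = {x. \<forall>i. x i \<longrightarrow> 1 \<le> i \<and> i \<le> m}"

definition switch :: "(nat \<Rightarrow> bool) \<Rightarrow> nat \<Rightarrow> (nat \<Rightarrow> bool)" where
  "switch x j = x(j := \<not> x j)"

definition djac :: "((nat \<Rightarrow> bool) \<Rightarrow> (nat \<Rightarrow> bool)) \<Rightarrow> nat \<Rightarrow> nat \<Rightarrow> (nat \<Rightarrow> bool) \<Rightarrow> int" where
  "djac g i j x =
     (of_bool (g (switch x j) i) - of_bool (g x i)) div (of_bool (switch x j j) - of_bool (x j))"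

text \<open>signed arcs (j, i, s) of the interaction graph G(g) of g : {0,1}^m -> {0,1}^m:
  an arc from j to i of sign s\<close>
definition arcs :: "nat \<Rightarrow> ((nat \<Rightarrow> bool) \<Rightarrow> (nat \<Rightarrow> bool)) \<Rightarrow> (nat \<times> nat \<times> int) set" where
  "arcs m g = {(j, i, s). j \<in> {1..m} \<and> i \<in> {1..m} \<and> s \<in> {-1, 1} \<and>
                          (\<exists>x\<in>bstates m. djac g i j x = s)}"

definition fixlast :: "nat \<Rightarrow> ((nat \<Rightarrow> bool) \<Rightarrow> (nat \<Rightarrow> bool)) \<Rightarrow> bool \<Rightarrow> ((nat \<Rightarrow> bool) \<Rightarrow> (nat \<Rightarrow> bool))" where
  "fixlast n f \<alpha> = (\<lambda>x i. if 1 \<le> i \<and> i \<le> n - 1 then f (x(n := \<alpha>)) i else False)"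

end

theory Submission
  imports Defs
begin

text \<open>Freezing the last component of f only restricts the states on which the Jacobian is
  evaluated: for i, j < n the entry (f^\<alpha>)_ij(x) equals f_ij(x, \<alpha>), which gives the inclusion.
  Conversely, if no arc leaves n towards another vertex, then switching component n never
  changes f_i for i \<noteq> n, so f_ij(y) does not depend on y_n and every arc j \<rightarrow> i of G(f)
  with i, j \<noteq> n is already witnessed at a state with y_n = \<alpha>.\<close>

lemma djac_eq_if:
  "djac g i j x = (if x j then of_bool (g x i) - of_bool (g (switch x j) i)
                   else of_bool (g (switch x j) i) - of_bool (g x i))"
  unfolding djac_def switch_def by auto

lemma switch_in_bstates: "x \<in> bstates m \<Longrightarrow> j \<in> {1..m} \<Longrightarrow> switch x j \<in> bstates m"
  unfolding bstates_def switch_def by auto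

lemma switch_commute: "j \<noteq> k \<Longrightarrow> switch (switch x j) k = switch (switch x k) j"
  unfolding switch_def by (auto simp: fun_eq_iff)

lemma fun_upd_eq_self_or_switch: "x(k := b) = x \<or> x(k := b) = switch x k"
  unfolding switch_def by (cases "x k = b") auto

lemma fun_upd_last_in_bstates: "x \<in> bstates (n - 1) \<Longrightarrow> n \<ge> 1 \<Longrightarrow> x(n := b) \<in> bstates n"
  unfolding bstates_def by auto

lemma fun_upd_last_False_in_bstates: "y \<in> bstates n \<Longrightarrow> y(n := False) \<in> bstates (n - 1)"
  unfolding bstates_def by (auto simp: le_diff_conv2)

lemma djac_fixlast:
  assumes "i \<in> {1..n - 1}" "j \<in> {1..n - 1}"
  shows "djac (fixlast n f \<alpha>) i j x = djac f i j (x(n := \<alpha>))"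
proof -
  have "j \<noteq> n" using assms by auto
  then have "(switch x j)(n := \<alpha>) = switch (x(n := \<alpha>)) j"
    unfolding switch_def by (auto simp: fun_eq_iff)
  with assms \<open>j \<noteq> n\<close> show ?thesis
    unfolding djac_eq_if fixlast_def by (auto simp: switch_def)
qed

lemma switch_invariant_if_no_arc:
  assumes "\<forall>s. (k, i, s) \<notin> arcs m g" "k \<in> {1..m}" "i \<in> {1..m}" "x \<in> bstates m"
  shows "g (switch x k) i = g x i"
proof (rule ccontr)
  assume "g (switch x k) i \<noteq> g x i"
  then have "djac g i k x \<in> {-1, 1}" by (auto simp: djac_eq_if)
  with assms(2-4) have "(k, i, djac g i k x) \<in> arcs m g" unfolding arcs_def by auto
  with assms(1) show False by blast
qed

lemma djac_switch_invariant:
  assumes "j \<noteq> k"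
    and "g (switch x k) i = g x i" "g (switch (switch x j) k) i = g (switch x j) i"
  shows "djac g i j (switch x k) = djac g i j x"
proof -
  have "switch x k j = x j" using assms(1) unfolding switch_def by auto
  with assms show ?thesis unfolding djac_eq_if by (simp add: switch_commute)
qed

lemma arcs_fixlast_subset:
  assumes "n \<ge> 2"
  shows "arcs (n - 1) (fixlast n f \<alpha>) \<subseteq> {(j, i, s) \<in> arcs n f. j \<noteq> n \<and> i \<noteq> n}"
proof
  fix a assume "a \<in> arcs (n - 1) (fixlast n f \<alpha>)"
  then obtain j i s x where a: "a = (j, i, s)" "j \<in> {1..n - 1}" "i \<in> {1..n - 1}"
    "s \<in> {-1, 1}" "x \<in> bstates (n - 1)" "djac (fixlast n f \<alpha>) i j x = s"
    unfolding arcs_def by auto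
  have "djac f i j (x(n := \<alpha>)) = s" using a(6) djac_fixlast[OF a(3,2)] by simp
  moreover have "x(n := \<alpha>) \<in> bstates n" using a(5) assms by (simp add: fun_upd_last_in_bstates)
  ultimately show "a \<in> {(j, i, s) \<in> arcs n f. j \<noteq> n \<and> i \<noteq> n}"
    using a assms unfolding arcs_def by auto
qed

lemma arcs_fixlast_superset:
  assumes "n \<ge> 2" and no_arc_from_n: "\<forall>i s. i \<noteq> n \<longrightarrow> (n, i, s) \<notin> arcs n f"
  shows "{(j, i, s) \<in> arcs n f. j \<noteq> n \<and> i \<noteq> n} \<subseteq> arcs (n - 1) (fixlast n f \<alpha>)"
proof
  fix a assume "a \<in> {(j, i, s) \<in> arcs n f. j \<noteq> n \<and> i \<noteq> n}"
  then obtain j i s y where a: "a = (j, i, s)" "j \<in> {1..n}" "i \<in> {1..n}" "s \<in> {-1, 1}"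
    "y \<in> bstates n" "djac f i j y = s" "j \<noteq> n" "i \<noteq> n"
    unfolding arcs_def by auto
  have n: "n \<in> {1..n}" using assms(1) by simp
  have "djac f i j (y(n := \<alpha>)) = djac f i j y"
  proof -
    have "djac f i j (switch y n) = djac f i j y"
    proof (rule djac_switch_invariant)
      have no_arc: "\<forall>s. (n, i, s) \<notin> arcs n f" using no_arc_from_n a(8) by blast
      show "f (switch y n) i = f y i"
        using switch_invariant_if_no_arc[OF no_arc n a(3) a(5)] .
      show "f (switch (switch y j) n) i = f (switch y j) i"
        using switch_invariant_if_no_arc[OF no_arc n a(3) switch_in_bstates[OF a(5,2)]] .
    qed (fact a(7))
    with fun_upd_eq_self_or_switch[of y n \<alpha>] show ?thesis by auto
  qed
  moreover have "i \<in> {1..n - 1}" "j \<in> {1..n - 1}" using a by auto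
  ultimately have "djac (fixlast n f \<alpha>) i j (y(n := False)) = s"
    using a(6) djac_fixlast[of i n j f \<alpha> "y(n := False)"] by simp
  with \<open>i \<in> {1..n - 1}\<close> \<open>j \<in> {1..n - 1}\<close> a(1,4) fun_upd_last_False_in_bstates[OF a(5)]
  show "a \<in> arcs (n - 1) (fixlast n f \<alpha>)"
    unfolding arcs_def by blast
qed

theorem lemma1:
  fixes n :: nat and f :: "(nat \<Rightarrow> bool) \<Rightarrow> (nat \<Rightarrow> bool)" and \<alpha> :: bool
  assumes "n \<ge> 2"
    and "\<forall>x\<in>bstates n. f x \<in> bstates n"
  shows "arcs (n - 1) (fixlast n f \<alpha>) \<subseteq> arcs n f
    \<and> ((\<forall>i s. i \<noteq> n \<longrightarrow> (n, i, s) \<notin> arcs n f) \<longrightarrow>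
         arcs (n - 1) (fixlast n f \<alpha>) = {(j, i, s) \<in> arcs n f. j \<noteq> n \<and> i \<noteq> n})"
proof (intro conjI impI)
  show "arcs (n - 1) (fixlast n f \<alpha>) \<subseteq> arcs n f"
    using arcs_fixlast_subset[OF assms(1)] by auto
  show "arcs (n - 1) (fixlast n f \<alpha>) = {(j, i, s) \<in> arcs n f. j \<noteq> n \<and> i \<noteq> n}"
    if "\<forall>i s. i \<noteq> n \<longrightarrow> (n, i, s) \<notin> arcs n f"
    using arcs_fixlast_subset[OF assms(1)] arcs_fixlast_superset[OF assms(1) that]
    by (rule subset_antisym)
qed

end
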